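(* For any graph $G=(V,E)$ and any ordering of its edges, the output $P$ of the port-based greedy procedure (Algorithm 1) described in the context is a collection of vertex-disjoint paths.
   Context: Algorithm 1: initialize $P\gets\emptyset$. Each vertex $v$ has two ports $v^0,v^1$, initially free. Iterate over the edges of $G$ in the given ordering; upon visiting $e=(u,v)$: if $v^0$ and $u^0$ are free, add $e$ to $P$ and mark $v^0,u^0$ occupied; else if $v^1$ and $u^0$ are free, add $e$ to $P$ and mark $v^1,u^0$ occupied; else if $v^0$ and $u^1$ are free, add $e$ to $P$ and mark $v^0,u^1$ occupied; otherwise skip $e$. Return $P$. *)

theory Defs
  imports Main
begin

(* State of Algorithm 1: (P, O0, O1) where P is the list of selected (oriented) edges,
   O0 the set of vertices whose port 0 is occupied, O1 those whose port 1 is occupied. *)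
definition greedy_step ::
  "('a \<times> 'a) list \<times> 'a set \<times> 'a set \<Rightarrow> 'a \<times> 'a \<Rightarrow> ('a \<times> 'a) list \<times> 'a set \<times> 'a set" where
  "greedy_step st e = (case st of (P, O0, O1) \<Rightarrow> (case e of (u, v) \<Rightarrow>
     if v \<notin> O0 \<and> u \<notin> O0 then (P @ [(u, v)], insert v (insert u O0), O1)
     else if v \<notin> O1 \<and> u \<notin> O0 then (P @ [(u, v)], insert u O0, insert v O1)
     else if v \<notin> O0 \<and> u \<notin> O1 then (P @ [(u, v)], insert v O0, insert u O1)
     else (P, O0, O1)))"

definition algorithm1 :: "('a \<times> 'a) list \<Rightarrow> ('a \<times> 'a) list" where
  "algorithm1 es = fst (foldl greedy_step ([], {}, {}) es)"

definition undir :: "'a \<times> 'a \<Rightarrow> 'a set" where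
  "undir e = (case e of (u, v) \<Rightarrow> {u, v})"

definition is_path :: "'a list \<Rightarrow> bool" where
  "is_path xs \<longleftrightarrow> distinct xs \<and> length xs \<ge> 2"

definition path_edges :: "'a list \<Rightarrow> 'a set set" where
  "path_edges xs = {{xs ! i, xs ! Suc i} | i. Suc i < length xs}"

definition vertex_disjoint_paths :: "'a set set \<Rightarrow> bool" where
  "vertex_disjoint_paths P \<longleftrightarrow>
     (\<exists>Ps. finite Ps \<and> (\<forall>p\<in>Ps. is_path p) \<and>
          (\<forall>p\<in>Ps. \<forall>q\<in>Ps. p \<noteq> q \<longrightarrow> set p \<inter> set q = {}) \<and>
          P = \<Union> (path_edges ` Ps))"

definition simple_graph :: "'a set \<Rightarrow> 'a set set \<Rightarrow> bool" where
  "simple_graph V E \<longleftrightarrow> finite V \<and> (\<forall>e\<in>E. \<exists>u v. e = {u, v} \<and> u \<in> V \<and> v \<in> V \<and> u \<noteq> v)"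

definition edge_ordering :: "'a set set \<Rightarrow> ('a \<times> 'a) list \<Rightarrow> bool" where
  "edge_ordering E es \<longleftrightarrow> distinct (map undir es) \<and> set (map undir es) = E"

end

theory Submission
  imports Defs
begin

(* Proof idea: throughout the run, port 0 of a vertex is occupied iff the vertex lies on one
   of the selected paths, and port 1 is occupied iff it is an inner vertex of its path.  An
   accepted edge either joins two uncovered vertices (a new path of length one) or joins an
   uncovered vertex to an endpoint of an existing path, which extends that path by one vertex;
   in both cases the selected edges remain the edge set of a family of vertex-disjoint paths. *)

definition inner_vertices :: "'a list \<Rightarrow> 'a set" where
  "inner_vertices p = set p - {hd p, last p}"

definition disjoint_path_family :: "'a list set \<Rightarrow> bool" where
  "disjoint_path_family Ps \<longleftrightarrow>
     finite Ps \<and> (\<forall>p\<in>Ps. is_path p) \<and> pairwise (\<lambda>p q. set p \<inter> set q = {}) Ps"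

lemma vertex_disjoint_paths_iff:
  "vertex_disjoint_paths P \<longleftrightarrow> (\<exists>Ps. disjoint_path_family Ps \<and> P = \<Union> (path_edges ` Ps))"
  by (simp add: vertex_disjoint_paths_def disjoint_path_family_def pairwise_def)

lemma disjoint_path_family_insert:
  assumes "disjoint_path_family Ps" "is_path p" "\<And>q. q \<in> Ps \<Longrightarrow> set q \<inter> set p = {}"
  shows "disjoint_path_family (insert p Ps)"
  using assms by (auto simp: disjoint_path_family_def pairwise_insert)

lemma disjoint_path_family_remove:
  "disjoint_path_family Ps \<Longrightarrow> disjoint_path_family (Ps - {p})"
  by (auto simp: disjoint_path_family_def pairwise_subset)

lemma path_edgesI: "Suc i < length xs \<Longrightarrow> {xs ! i, xs ! Suc i} \<in> path_edges xs"
  unfolding path_edges_def by blast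

lemma path_edgesE:
  assumes "e \<in> path_edges xs"
  obtains i where "Suc i < length xs" "e = {xs ! i, xs ! Suc i}"
  using assms unfolding path_edges_def by blast

lemma path_edges_Cons_Cons:
  "path_edges (x # y # zs) = insert {x, y} (path_edges (y # zs))"
proof (intro equalityI subsetI)
  fix e assume "e \<in> path_edges (x # y # zs)"
  then obtain i where i: "Suc i < length (x # y # zs)" "e = {(x # y # zs) ! i, (x # y # zs) ! Suc i}"
    by (rule path_edgesE)
  show "e \<in> insert {x, y} (path_edges (y # zs))"
  proof (cases i)
    case (Suc j)
    then show ?thesis
      using i path_edgesI[of j "y # zs"] by simp
  qed (use i in simp)
next
  fix e assume "e \<in> insert {x, y} (path_edges (y # zs))"
  then show "e \<in> path_edges (x # y # zs)"
  proof
    assume "e = {x, y}"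
    then show ?thesis
      using path_edgesI[of 0 "x # y # zs"] by simp
  next
    assume "e \<in> path_edges (y # zs)"
    then obtain i where "Suc i < length (y # zs)" "e = {(y # zs) ! i, (y # zs) ! Suc i}"
      by (rule path_edgesE)
    then show ?thesis
      using path_edgesI[of "Suc i" "x # y # zs"] by simp
  qed
qed

lemma path_edges_singleton: "path_edges [x] = {}"
  by (simp add: path_edges_def)

lemma path_edges_Cons:
  "p \<noteq> [] \<Longrightarrow> path_edges (u # p) = insert {u, hd p} (path_edges p)"
  by (cases p) (simp_all add: path_edges_Cons_Cons)

lemma path_edges_snoc:
  "p \<noteq> [] \<Longrightarrow> path_edges (p @ [w]) = insert {last p, w} (path_edges p)"
proof (induction p rule: induct_list012)
  case (3 x y zs)
  then show ?case by (simp add: path_edges_Cons_Cons insert_commute)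
qed (simp_all add: path_edges_Cons_Cons path_edges_singleton)

lemma distinct_hd_neq_last:
  assumes "distinct p" "length p \<ge> 2"
  shows "hd p \<noteq> last p"
  using assms by (cases p) (auto simp: last_in_set)

lemma path_extend_at_endpoint:
  assumes "is_path p" "x \<in> set p" "x \<notin> inner_vertices p" "w \<notin> set p"
  obtains p' where "is_path p'" "set p' = insert w (set p)"
    "path_edges p' = insert {x, w} (path_edges p)"
    "inner_vertices p' = insert x (inner_vertices p)"
proof -
  have p: "distinct p" "length p \<ge> 2" "p \<noteq> []"
    using assms(1) by (auto simp: is_path_def)
  have hd_last: "hd p \<noteq> last p"
    using distinct_hd_neq_last p(1,2) .
  consider "x = last p" | "x = hd p"
    using assms(2,3) by (auto simp: inner_vertices_def)
  then show ?thesis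
  proof cases
    case 1
    show ?thesis
    proof (rule that[of "p @ [w]"])
      show "inner_vertices (p @ [w]) = insert x (inner_vertices p)"
        using 1 assms(4) hd_last p(3) by (auto simp: inner_vertices_def hd_append)
    qed (use 1 assms(4) p in \<open>simp_all add: is_path_def path_edges_snoc\<close>)
  next
    case 2
    show ?thesis
    proof (rule that[of "w # p"])
      show "inner_vertices (w # p) = insert x (inner_vertices p)"
        using 2 assms(4) hd_last p(3) by (auto simp: inner_vertices_def)
    qed (use 2 assms(4) p in \<open>simp_all add: is_path_def path_edges_Cons insert_commute\<close>)
  qed
qed

fun port_invariant :: "('a \<times> 'a) list \<times> 'a set \<times> 'a set \<Rightarrow> 'a list set \<Rightarrow> bool" where
  "port_invariant (P, O0, O1) Ps \<longleftrightarrow>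
     disjoint_path_family Ps \<and> set (map undir P) = \<Union> (path_edges ` Ps) \<and>
     O0 = \<Union> (set ` Ps) \<and> O1 = \<Union> (inner_vertices ` Ps)"

lemma port_invariant_new_path:
  assumes inv: "port_invariant (P, O0, O1) Ps" and "u \<noteq> v" "u \<notin> O0" "v \<notin> O0"
  shows "port_invariant (P @ [(u, v)], insert v (insert u O0), O1) (insert [u, v] Ps)"
proof -
  have "disjoint_path_family (insert [u, v] Ps)"
    using inv assms(2-4) by (intro disjoint_path_family_insert) (auto simp: is_path_def)
  moreover have "inner_vertices [u, v] = {}"
    by (simp add: inner_vertices_def)
  ultimately show ?thesis
    using inv by (auto simp: undir_def path_edges_Cons path_edges_singleton)
qed

lemma port_invariant_extend_path:
  assumes inv: "port_invariant (P, O0, O1) Ps"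
    and "x \<in> O0" "x \<notin> O1" "w \<notin> O0" "undir e = {x, w}"
  shows "\<exists>Ps'. port_invariant (P @ [e], insert w O0, insert x O1) Ps'"
proof -
  have fam: "disjoint_path_family Ps" and edges: "set (map undir P) = \<Union> (path_edges ` Ps)"
    and O0: "O0 = \<Union> (set ` Ps)" and O1: "O1 = \<Union> (inner_vertices ` Ps)"
    using inv by simp_all
  obtain p where p: "p \<in> Ps" "x \<in> set p"
    using O0 assms(2) by blast
  have "is_path p" "x \<notin> inner_vertices p" "w \<notin> set p"
    using fam p O0 O1 assms(3,4) by (auto simp: disjoint_path_family_def)
  then obtain p' where p': "is_path p'" "set p' = insert w (set p)"
    "path_edges p' = insert {x, w} (path_edges p)"
    "inner_vertices p' = insert x (inner_vertices p)"
    by (rule path_extend_at_endpoint[OF _ p(2)])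
  define Qs where "Qs = Ps - {p}"
  have Ps: "Ps = insert p Qs"
    using p(1) Qs_def by blast
  have disjoint_p': "set q \<inter> set p' = {}" if "q \<in> Qs" for q
  proof -
    have "set q \<inter> set p = {}"
      using fam p(1) that Qs_def by (auto simp: disjoint_path_family_def pairwise_def)
    moreover have "w \<notin> set q"
      using O0 assms(4) that Qs_def by blast
    ultimately show ?thesis
      unfolding p'(2) by simp
  qed
  have "disjoint_path_family (insert p' Qs)"
    using disjoint_path_family_remove[OF fam, of p, folded Qs_def] p'(1) disjoint_p'
    by (rule disjoint_path_family_insert)
  moreover have "set (map undir (P @ [e])) = \<Union> (path_edges ` insert p' Qs)"
    using edges p'(3) assms(5) unfolding Ps by simp
  moreover have "insert w O0 = \<Union> (set ` insert p' Qs)"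
    using O0 p'(2) unfolding Ps by simp
  moreover have "insert x O1 = \<Union> (inner_vertices ` insert p' Qs)"
    using O1 p'(4) unfolding Ps by simp
  ultimately have "port_invariant (P @ [e], insert w O0, insert x O1) (insert p' Qs)"
    by simp
  then show ?thesis ..
qed

lemma port_invariant_greedy_step:
  assumes "port_invariant st Ps" "fst e \<noteq> snd e"
  shows "\<exists>Ps'. port_invariant (greedy_step st e) Ps'"
proof -
  obtain P O0 O1 u v where st: "st = (P, O0, O1)" and e: "e = (u, v)"
    by (cases st, cases e)
  have inv: "port_invariant (P, O0, O1) Ps" and "u \<noteq> v"
    using assms st e by simp_all
  have undir_uv: "undir (u, v) = {u, v}" and undir_vu: "undir (u, v) = {v, u}"
    by (auto simp: undir_def)
  have step: "greedy_step st e =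
     (if v \<notin> O0 \<and> u \<notin> O0 then (P @ [(u, v)], insert v (insert u O0), O1)
      else if v \<notin> O1 \<and> u \<notin> O0 then (P @ [(u, v)], insert u O0, insert v O1)
      else if v \<notin> O0 \<and> u \<notin> O1 then (P @ [(u, v)], insert v O0, insert u O1)
      else (P, O0, O1))"
    by (simp add: greedy_step_def st e)
  show ?thesis
  proof (cases "v \<notin> O0 \<and> u \<notin> O0")
    case True
    then show ?thesis
      using port_invariant_new_path[OF inv \<open>u \<noteq> v\<close>] by (auto simp: step)
  next
    case not_new: False
    show ?thesis
    proof (cases "v \<notin> O1 \<and> u \<notin> O0")
      case True
      then have "v \<in> O0"
        using not_new by blast
      then show ?thesis
        using True not_new port_invariant_extend_path[OF inv _ _ _ undir_vu] by (simp add: step)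
    next
      case not_at_v: False
      show ?thesis
      proof (cases "v \<notin> O0 \<and> u \<notin> O1")
        case True
        then have "u \<in> O0"
          using not_new by blast
        then show ?thesis
          using True not_new not_at_v port_invariant_extend_path[OF inv _ _ _ undir_uv]
          by (simp add: step)
      next
        case False
        then show ?thesis
          using inv not_new not_at_v by (auto simp: step)
      qed
    qed
  qed
qed

lemma port_invariant_foldl:
  assumes "port_invariant st Ps" "\<forall>e\<in>set es. fst e \<noteq> snd e"
  shows "\<exists>Ps'. port_invariant (foldl greedy_step st es) Ps'"
  using assms
proof (induction es arbitrary: st Ps)
  case (Cons e es)
  then obtain Ps' where "port_invariant (greedy_step st e) Ps'"
    using port_invariant_greedy_step by (metis list.set_intros(1))
  then show ?case
    using Cons by simp
qed auto

lemma edge_ordering_no_loops: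
  assumes "simple_graph V E" "edge_ordering E es" "(a, b) \<in> set es"
  shows "a \<noteq> b"
proof -
  have "{a, b} \<in> E"
    using assms(2,3) unfolding edge_ordering_def undir_def by force
  then show ?thesis
    using assms(1) unfolding simple_graph_def by (metis doubleton_eq_iff)
qed

theorem claim4p1:
  fixes V :: "'a set" and E :: "'a set set" and es :: "('a \<times> 'a) list"
  assumes "simple_graph V E"
    and "edge_ordering E es"
  shows "vertex_disjoint_paths (set (map undir (algorithm1 es)))"
proof -
  have "\<forall>e\<in>set es. fst e \<noteq> snd e"
    using edge_ordering_no_loops[OF assms] by auto
  moreover have "port_invariant ([], {}, {}) {}"
    by (simp add: disjoint_path_family_def)
  ultimately obtain Ps where "port_invariant (foldl greedy_step ([], {}, {}) es) Ps"
    using port_invariant_foldl by blast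
  then show ?thesis
    unfolding algorithm1_def vertex_disjoint_paths_iff
    by (cases "foldl greedy_step ([], {}, {}) es") auto
qed

end
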